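(* A finite simple graph $G$ belongs to $\mathcal{G}_2$ if and only if $G$ has a family of cliques covering every edge of $G$ such that every clique in the family contains a simplicial vertex of $G$.
   Context: A finite topology $\tau$ on a finite set $X$ is a family of subsets of $X$ (the open sets) containing $\emptyset$ and $X$ and closed under unions and intersections. Distinct $x,y\in X$ are $T_2$-separated if there exist disjoint open sets $U_x\ni x$ and $U_y\ni y$. $G_2(\tau)$ is the simple graph with vertex set $X$ in which distinct $x,y$ are adjacent iff they are not $T_2$-separated; $\mathcal{G}_2$ is the class of graphs isomorphic to $G_2(\tau)$ for some finite topology $\tau$. A vertex $v$ of $G$ is simplicial if its closed neighborhood $N[v]$ induces a clique. *)

theory Defs
  imports Main
begin

definition finite_topology :: "'b set \<Rightarrow> 'b set set \<Rightarrow> bool" where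
  "finite_topology X T \<longleftrightarrow> finite X \<and> T \<subseteq> Pow X \<and> {} \<in> T \<and> X \<in> T \<and>
     (\<forall>U\<in>T. \<forall>W\<in>T. U \<union> W \<in> T \<and> U \<inter> W \<in> T)"

definition T2_separated :: "'b set set \<Rightarrow> 'b \<Rightarrow> 'b \<Rightarrow> bool" where
  "T2_separated T x y \<longleftrightarrow> (\<exists>U\<in>T. \<exists>W\<in>T. x \<in> U \<and> y \<in> W \<and> U \<inter> W = {})"

definition G2_adj :: "'b set set \<Rightarrow> 'b \<Rightarrow> 'b \<Rightarrow> bool" where
  "G2_adj T x y \<longleftrightarrow> x \<noteq> y \<and> \<not> T2_separated T x y"

definition simple_graph :: "'a set \<Rightarrow> ('a \<Rightarrow> 'a \<Rightarrow> bool) \<Rightarrow> bool" where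
  "simple_graph V E \<longleftrightarrow> finite V \<and> (\<forall>x y. E x y \<longrightarrow> x \<in> V \<and> y \<in> V) \<and>
     (\<forall>x y. E x y \<longrightarrow> E y x) \<and> (\<forall>x. \<not> E x x)"

definition graph_iso :: "'a set \<Rightarrow> ('a \<Rightarrow> 'a \<Rightarrow> bool) \<Rightarrow> 'b set \<Rightarrow> ('b \<Rightarrow> 'b \<Rightarrow> bool) \<Rightarrow> ('a \<Rightarrow> 'b) \<Rightarrow> bool" where
  "graph_iso V E W F f \<longleftrightarrow> bij_betw f V W \<and> (\<forall>x\<in>V. \<forall>y\<in>V. E x y \<longleftrightarrow> F (f x) (f y))"

text \<open>Every finite set is in bijection with a finite set of naturals,
  so taking X :: nat set loses no generality.\<close>
definition in_G2 :: "'a set \<Rightarrow> ('a \<Rightarrow> 'a \<Rightarrow> bool) \<Rightarrow> bool" where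
  "in_G2 V E \<longleftrightarrow> (\<exists>(X::nat set) T f. finite_topology X T \<and> graph_iso V E X (G2_adj T) f)"

definition clique :: "'a set \<Rightarrow> ('a \<Rightarrow> 'a \<Rightarrow> bool) \<Rightarrow> 'a set \<Rightarrow> bool" where
  "clique V E K \<longleftrightarrow> K \<subseteq> V \<and> (\<forall>x\<in>K. \<forall>y\<in>K. x \<noteq> y \<longrightarrow> E x y)"

definition closed_nbhd :: "'a set \<Rightarrow> ('a \<Rightarrow> 'a \<Rightarrow> bool) \<Rightarrow> 'a \<Rightarrow> 'a set" where
  "closed_nbhd V E v = insert v {u \<in> V. E v u}"

definition simplicial :: "'a set \<Rightarrow> ('a \<Rightarrow> 'a \<Rightarrow> bool) \<Rightarrow> 'a \<Rightarrow> bool" where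
  "simplicial V E v \<longleftrightarrow> v \<in> V \<and> clique V E (closed_nbhd V E v)"

end

(* In a finite topology every point a has a least open neighbourhood M a, and two points are
   T2-separated iff their least open neighbourhoods are disjoint.
   If G = G_2(T) and xy is an edge, the open set M x \<inter> M y contains a minimal nonempty open
   set; each of its points w satisfies M p = M w for all p \<in> M w, so the closed neighbourhood
   of w is {u. w \<in> M u}, a clique containing x and y with w simplicial.
   Conversely, let N x consist of x and the simplicial vertices adjacent to x. The sets N x are
   the least open neighbourhoods of an Alexandrov topology, and N x, N y meet iff x, y lie in a
   common closed neighbourhood of a simplicial vertex, i.e. iff xy is an edge by the hypothesis. *)
theory Submission
  imports Defs
begin

definition least_open_nbhd :: "'b set set \<Rightarrow> 'b \<Rightarrow> 'b set" where
  "least_open_nbhd T a = \<Inter>{U\<in>T. a \<in> U}"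

lemma finite_topology_finite: "finite_topology X T \<Longrightarrow> finite T"
  unfolding finite_topology_def by (meson finite_Pow_iff finite_subset)

lemma least_open_nbhd_open:
  assumes "finite_topology X T" "a \<in> X"
  shows "least_open_nbhd T a \<in> T"
proof -
  have "\<Inter>{U\<in>T. a \<in> U} \<in> {U\<in>T. a \<in> U}"
    using assms finite_topology_finite[OF assms(1)]
    by (intro finite_Inf_in) (auto simp: finite_topology_def)
  then show ?thesis
    unfolding least_open_nbhd_def by blast
qed

lemma mem_least_open_nbhd: "a \<in> least_open_nbhd T a"
  unfolding least_open_nbhd_def by blast

lemma least_open_nbhd_subset: "U \<in> T \<Longrightarrow> a \<in> U \<Longrightarrow> least_open_nbhd T a \<subseteq> U"
  unfolding least_open_nbhd_def by blast

lemma T2_separated_iff_least_open_nbhds_disjoint: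
  assumes top: "finite_topology X T" and "x \<in> X" "y \<in> X"
  shows "T2_separated T x y \<longleftrightarrow> least_open_nbhd T x \<inter> least_open_nbhd T y = {}"
proof
  assume "T2_separated T x y"
  then obtain U W where "U \<in> T" "W \<in> T" "x \<in> U" "y \<in> W" "U \<inter> W = {}"
    unfolding T2_separated_def by blast
  then show "least_open_nbhd T x \<inter> least_open_nbhd T y = {}"
    using least_open_nbhd_subset[of U T x] least_open_nbhd_subset[of W T y] by blast
next
  assume "least_open_nbhd T x \<inter> least_open_nbhd T y = {}"
  then show "T2_separated T x y"
    unfolding T2_separated_def
    using least_open_nbhd_open[OF top assms(2)] least_open_nbhd_open[OF top assms(3)]
      mem_least_open_nbhd[of x T] mem_least_open_nbhd[of y T] by blast
qed

lemma G2_adj_iff_least_open_nbhds_meet: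
  assumes "finite_topology X T" "x \<in> X" "y \<in> X"
  shows "G2_adj T x y \<longleftrightarrow> x \<noteq> y \<and> least_open_nbhd T x \<inter> least_open_nbhd T y \<noteq> {}"
  unfolding G2_adj_def T2_separated_iff_least_open_nbhds_disjoint[OF assms] by simp

definition minimal_point :: "'b set set \<Rightarrow> 'b \<Rightarrow> bool" where
  "minimal_point T w \<longleftrightarrow> (\<forall>p\<in>least_open_nbhd T w. least_open_nbhd T p = least_open_nbhd T w)"

lemma open_contains_minimal_point:
  assumes top: "finite_topology X T" and "U \<in> T" "U \<noteq> {}"
  obtains w where "w \<in> X" "least_open_nbhd T w \<subseteq> U" "minimal_point T w"
proof -
  let ?\<U> = "{M \<in> T. M \<noteq> {} \<and> M \<subseteq> U}"
  have TX: "\<And>M. M \<in> T \<Longrightarrow> M \<subseteq> X" using top unfolding finite_topology_def by blast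
  have "finite ?\<U>" using finite_topology_finite[OF top] by simp
  moreover have "?\<U> \<noteq> {}" using assms(2,3) by blast
  ultimately obtain M where M: "M \<in> ?\<U>" and M_min: "\<And>M'. M' \<in> ?\<U> \<Longrightarrow> M' \<subseteq> M \<Longrightarrow> M = M'"
    by (meson finite_has_minimal)
  have nbhd_M: "least_open_nbhd T p = M" if p: "p \<in> M" for p
  proof -
    have "p \<in> X" using TX M p by blast
    then have "least_open_nbhd T p \<in> ?\<U>"
      using least_open_nbhd_open[OF top] least_open_nbhd_subset[of M T p] mem_least_open_nbhd[of p T] M p
      by blast
    then show ?thesis
      using M_min least_open_nbhd_subset[of M T p] M p by blast
  qed
  obtain w where w: "w \<in> M" using M by blast
  show thesis
  proof (rule that[of w])
    show "w \<in> X" using TX M w by blast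
    show "least_open_nbhd T w \<subseteq> U" using nbhd_M[OF w] M by blast
    show "minimal_point T w"
      unfolding minimal_point_def using nbhd_M w by simp
  qed
qed

definition G2_realization :: "'a set set \<Rightarrow> 'a set \<Rightarrow> ('a \<Rightarrow> 'a \<Rightarrow> bool) \<Rightarrow> bool" where
  "G2_realization T V E \<longleftrightarrow> finite_topology V T \<and> (\<forall>x\<in>V. \<forall>y\<in>V. E x y \<longleftrightarrow> G2_adj T x y)"

definition simplicially_covered :: "'a set \<Rightarrow> ('a \<Rightarrow> 'a \<Rightarrow> bool) \<Rightarrow> bool" where
  "simplicially_covered V E \<longleftrightarrow>
     (\<forall>x y. E x y \<longrightarrow> (\<exists>v. simplicial V E v \<and> x \<in> closed_nbhd V E v \<and> y \<in> closed_nbhd V E v))"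

lemma G2_realization_adj_iff:
  assumes "G2_realization T V E" "x \<in> V" "y \<in> V"
  shows "E x y \<longleftrightarrow> x \<noteq> y \<and> least_open_nbhd T x \<inter> least_open_nbhd T y \<noteq> {}"
  using assms G2_adj_iff_least_open_nbhds_meet[of V T x y] unfolding G2_realization_def by simp

lemma closed_nbhd_minimal_point:
  assumes real: "G2_realization T V E" and w: "w \<in> V" "minimal_point T w"
  shows "closed_nbhd V E w = {u \<in> V. w \<in> least_open_nbhd T u}"
proof -
  let ?M = "least_open_nbhd T"
  have top: "finite_topology V T" using real unfolding G2_realization_def by blast
  have "w \<in> ?M u" if u: "u \<in> V" "E w u" for u
  proof -
    obtain p where p: "p \<in> ?M w" "p \<in> ?M u"
      using G2_realization_adj_iff[OF real w(1) u(1)] u(2) by blast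
    have "?M p = ?M w" using w(2) p(1) unfolding minimal_point_def by blast
    then have "?M w \<subseteq> ?M u"
      using least_open_nbhd_subset[OF least_open_nbhd_open[OF top u(1)] p(2)] by simp
    then show ?thesis using mem_least_open_nbhd[of w T] by blast
  qed
  moreover have "E w u" if "u \<in> V" "w \<in> ?M u" "u \<noteq> w" for u
    using G2_realization_adj_iff[OF real w(1) that(1)] that(2,3) mem_least_open_nbhd[of w T] by blast
  ultimately show ?thesis
    unfolding closed_nbhd_def using w(1) mem_least_open_nbhd[of w T] by blast
qed

lemma simplicial_minimal_point:
  assumes real: "G2_realization T V E" and w: "w \<in> V" "minimal_point T w"
  shows "simplicial V E w"
  unfolding simplicial_def clique_def closed_nbhd_minimal_point[OF assms]
  using w(1) G2_realization_adj_iff[OF real] by blast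

lemma simplicially_covered_if_G2_realization:
  assumes real: "G2_realization T V E" and edges: "\<And>x y. E x y \<Longrightarrow> x \<in> V \<and> y \<in> V"
  shows "simplicially_covered V E"
  unfolding simplicially_covered_def
proof (intro allI impI)
  let ?M = "least_open_nbhd T"
  have top: "finite_topology V T" using real unfolding G2_realization_def by blast
  fix x y assume "E x y"
  then have V: "x \<in> V" "y \<in> V" and "?M x \<inter> ?M y \<noteq> {}"
    using edges G2_realization_adj_iff[OF real] by blast+
  moreover have "?M x \<inter> ?M y \<in> T"
    using top least_open_nbhd_open[OF top V(1)] least_open_nbhd_open[OF top V(2)]
    unfolding finite_topology_def by blast
  ultimately obtain w where w: "w \<in> V" "?M w \<subseteq> ?M x \<inter> ?M y" "minimal_point T w"
    using open_contains_minimal_point[OF top] by metis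
  have "x \<in> closed_nbhd V E w" "y \<in> closed_nbhd V E w"
    unfolding closed_nbhd_minimal_point[OF real w(1,3)]
    using V w(2) mem_least_open_nbhd[of w T] by blast+
  then show "\<exists>v. simplicial V E v \<and> x \<in> closed_nbhd V E v \<and> y \<in> closed_nbhd V E v"
    using simplicial_minimal_point[OF real w(1,3)] by blast
qed

definition alexandrov_topology :: "'a set \<Rightarrow> ('a \<Rightarrow> 'a set) \<Rightarrow> 'a set set" where
  "alexandrov_topology V N = {A. A \<subseteq> V \<and> (\<forall>x\<in>A. N x \<subseteq> A)}"

lemma finite_topology_alexandrov:
  assumes "finite V" "\<And>x. x \<in> V \<Longrightarrow> N x \<subseteq> V"
  shows "finite_topology V (alexandrov_topology V N)"
  using assms unfolding finite_topology_def alexandrov_topology_def by blast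

lemma least_open_nbhd_alexandrov:
  assumes "x \<in> V" "x \<in> N x" "\<And>y. y \<in> V \<Longrightarrow> N y \<subseteq> V"
    "\<And>y z. y \<in> V \<Longrightarrow> z \<in> N y \<Longrightarrow> N z \<subseteq> N y"
  shows "least_open_nbhd (alexandrov_topology V N) x = N x"
proof -
  have "N x \<in> alexandrov_topology V N"
    unfolding alexandrov_topology_def using assms by blast
  then show ?thesis
    using assms(2) unfolding least_open_nbhd_def alexandrov_topology_def by blast
qed

lemma mem_closed_nbhd_iff: "u \<in> closed_nbhd V E v \<longleftrightarrow> u = v \<or> (u \<in> V \<and> E v u)"
  unfolding closed_nbhd_def by blast

lemma simplicial_in_vertices: "simplicial V E s \<Longrightarrow> s \<in> V"
  unfolding simplicial_def by blast

lemma simplicial_adj: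
  assumes "simplicial V E s" "a \<in> closed_nbhd V E s" "b \<in> closed_nbhd V E s" "a \<noteq> b"
  shows "E a b"
  using assms unfolding simplicial_def clique_def by blast

lemma closed_nbhd_simplicial_subset:
  assumes "simplicial V E s" "b \<in> closed_nbhd V E s"
  shows "closed_nbhd V E s \<subseteq> closed_nbhd V E b"
proof
  fix a assume a: "a \<in> closed_nbhd V E s"
  have "a \<in> V" using a assms(1) unfolding simplicial_def clique_def by blast
  then show "a \<in> closed_nbhd V E b"
    using simplicial_adj[OF assms a] unfolding mem_closed_nbhd_iff by blast
qed

lemma mem_closed_nbhd_commute:
  assumes "simple_graph V E" "u \<in> V" "v \<in> closed_nbhd V E u"
  shows "u \<in> closed_nbhd V E v"
  using assms unfolding simple_graph_def mem_closed_nbhd_iff by blast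

definition simplicial_nbhd :: "'a set \<Rightarrow> ('a \<Rightarrow> 'a \<Rightarrow> bool) \<Rightarrow> 'a \<Rightarrow> 'a set" where
  "simplicial_nbhd V E x = insert x {s. simplicial V E s \<and> x \<in> closed_nbhd V E s}"

lemma simplicial_nbhd_subset: "x \<in> V \<Longrightarrow> simplicial_nbhd V E x \<subseteq> V"
  unfolding simplicial_nbhd_def simplicial_def by auto

lemma simplicial_nbhd_trans:
  assumes G: "simple_graph V E" and z: "z \<in> simplicial_nbhd V E y"
  shows "simplicial_nbhd V E z \<subseteq> simplicial_nbhd V E y"
proof
  fix u assume u: "u \<in> simplicial_nbhd V E z"
  show "u \<in> simplicial_nbhd V E y"
  proof (cases "z = y \<or> u = z")
    case False
    then have z: "simplicial V E z" "y \<in> closed_nbhd V E z"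
      and u: "simplicial V E u" "z \<in> closed_nbhd V E u"
      using z u unfolding simplicial_nbhd_def by blast+
    have "u \<in> closed_nbhd V E z"
      using mem_closed_nbhd_commute[OF G simplicial_in_vertices[OF u(1)] u(2)] .
    then have "y \<in> closed_nbhd V E u"
      using closed_nbhd_simplicial_subset[OF z(1)] z(2) by blast
    then show ?thesis
      using u(1) unfolding simplicial_nbhd_def by blast
  qed (use z u in blast)
qed

lemma adj_iff_simplicial_nbhds_meet:
  assumes G: "simple_graph V E" and cover: "simplicially_covered V E" and "x \<in> V" "y \<in> V"
  shows "E x y \<longleftrightarrow> x \<noteq> y \<and> simplicial_nbhd V E x \<inter> simplicial_nbhd V E y \<noteq> {}"
proof
  assume "E x y"
  then obtain v where "simplicial V E v" "x \<in> closed_nbhd V E v" "y \<in> closed_nbhd V E v"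
    using cover unfolding simplicially_covered_def by blast
  moreover have "x \<noteq> y" using \<open>E x y\<close> G unfolding simple_graph_def by blast
  ultimately show "x \<noteq> y \<and> simplicial_nbhd V E x \<inter> simplicial_nbhd V E y \<noteq> {}"
    unfolding simplicial_nbhd_def by blast
next
  assume "x \<noteq> y \<and> simplicial_nbhd V E x \<inter> simplicial_nbhd V E y \<noteq> {}"
  then obtain z where "x \<noteq> y" "z \<in> simplicial_nbhd V E x" "z \<in> simplicial_nbhd V E y"
    by blast
  then consider "z = x" "y \<in> closed_nbhd V E x" | "z = y" "x \<in> closed_nbhd V E y"
    | "simplicial V E z" "x \<in> closed_nbhd V E z" "y \<in> closed_nbhd V E z"
    unfolding simplicial_nbhd_def by blast
  then show "E x y"
    using simplicial_adj[of V E z x y] \<open>x \<noteq> y\<close> G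
    unfolding mem_closed_nbhd_iff simple_graph_def by cases blast+
qed

lemma G2_realization_alexandrov_simplicial_nbhd:
  assumes G: "simple_graph V E" and cover: "simplicially_covered V E"
  shows "G2_realization (alexandrov_topology V (simplicial_nbhd V E)) V E"
proof -
  let ?T = "alexandrov_topology V (simplicial_nbhd V E)"
  have top: "finite_topology V ?T"
    using G simplicial_nbhd_subset[of _ V E]
    by (intro finite_topology_alexandrov) (auto simp: simple_graph_def)
  have "least_open_nbhd ?T x = simplicial_nbhd V E x" if "x \<in> V" for x
    using that simplicial_nbhd_subset[of _ V E] simplicial_nbhd_trans[OF G]
    by (intro least_open_nbhd_alexandrov) (auto simp: simplicial_nbhd_def)
  then show ?thesis
    unfolding G2_realization_def
    using top G2_adj_iff_least_open_nbhds_meet[OF top] adj_iff_simplicial_nbhds_meet[OF G cover]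
    by simp
qed

lemma finite_topology_image:
  assumes top: "finite_topology X T" and inj: "inj_on g X"
  shows "finite_topology (g ` X) ((`) g ` T)"
  unfolding finite_topology_def
proof (intro conjI ballI)
  have TX: "T \<subseteq> Pow X" "{} \<in> T" "X \<in> T" "finite X"
    using top unfolding finite_topology_def by blast+
  then show "finite (g ` X)" "(`) g ` T \<subseteq> Pow (g ` X)" "{} \<in> (`) g ` T" "g ` X \<in> (`) g ` T"
    by auto
  fix U' W' assume "U' \<in> (`) g ` T" "W' \<in> (`) g ` T"
  then obtain U W where UW: "U \<in> T" "W \<in> T" and U'W': "U' = g ` U" "W' = g ` W"
    by blast
  have "U \<union> W \<in> T" "U \<inter> W \<in> T"
    using top UW unfolding finite_topology_def by blast+
  moreover have "U' \<union> W' = g ` (U \<union> W)" "U' \<inter> W' = g ` (U \<inter> W)"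
    unfolding U'W' image_Un using inj_on_image_Int[OF inj, of U W] UW TX(1) by auto
  ultimately show "U' \<union> W' \<in> (`) g ` T" "U' \<inter> W' \<in> (`) g ` T"
    by simp_all
qed

lemma T2_separated_image:
  assumes top: "finite_topology X T" and inj: "inj_on g X" and x: "x \<in> X" and y: "y \<in> X"
  shows "T2_separated ((`) g ` T) (g x) (g y) \<longleftrightarrow> T2_separated T x y"
proof -
  have "T2_separated ((`) g ` T) (g x) (g y) \<longleftrightarrow>
      (\<exists>U\<in>T. \<exists>W\<in>T. g x \<in> g ` U \<and> g y \<in> g ` W \<and> g ` U \<inter> g ` W = {})"
    unfolding T2_separated_def by blast
  also have "\<dots> \<longleftrightarrow> (\<exists>U\<in>T. \<exists>W\<in>T. x \<in> U \<and> y \<in> W \<and> U \<inter> W = {})"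
  proof (intro bex_cong refl)
    fix U W assume "U \<in> T" "W \<in> T"
    then have UW: "U \<subseteq> X" "W \<subseteq> X" using top unfolding finite_topology_def by blast+
    have "g ` U \<inter> g ` W = g ` (U \<inter> W)" using inj_on_image_Int[OF inj UW] by simp
    then show "g x \<in> g ` U \<and> g y \<in> g ` W \<and> g ` U \<inter> g ` W = {} \<longleftrightarrow> x \<in> U \<and> y \<in> W \<and> U \<inter> W = {}"
      using inj_on_image_mem_iff[OF inj x UW(1)] inj_on_image_mem_iff[OF inj y UW(2)] by simp
  qed
  finally show ?thesis
    unfolding T2_separated_def .
qed

lemma G2_adj_image:
  assumes "finite_topology X T" "inj_on g X" "x \<in> X" "y \<in> X"
  shows "G2_adj ((`) g ` T) (g x) (g y) \<longleftrightarrow> G2_adj T x y"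
  using T2_separated_image[OF assms] inj_on_eq_iff[OF assms(2-4)]
  unfolding G2_adj_def by blast

lemma in_G2_iff_ex_G2_realization:
  assumes "finite V"
  shows "in_G2 V E \<longleftrightarrow> (\<exists>T. G2_realization T V E)"
proof
  assume "in_G2 V E"
  then obtain X :: "nat set" and T f
    where top: "finite_topology X T" and iso: "graph_iso V E X (G2_adj T) f"
    unfolding in_G2_def by blast
  have f: "bij_betw f V X" using iso unfolding graph_iso_def by blast
  define g where "g = the_inv_into V f"
  have g: "inj_on g X" "g ` X = V"
    using bij_betw_the_inv_into[OF f] unfolding g_def bij_betw_def by blast+
  have "E x y \<longleftrightarrow> G2_adj ((`) g ` T) x y" if "x \<in> V" "y \<in> V" for x y
  proof -
    have "E x y \<longleftrightarrow> G2_adj T (f x) (f y)"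
      using iso that unfolding graph_iso_def by blast
    also have "\<dots> \<longleftrightarrow> G2_adj ((`) g ` T) (g (f x)) (g (f y))"
      using G2_adj_image[OF top g(1)] bij_betwE[OF f] that by simp
    also have "\<dots> \<longleftrightarrow> G2_adj ((`) g ` T) x y"
      using the_inv_into_f_f[OF bij_betw_imp_inj_on[OF f]] that unfolding g_def by simp
    finally show ?thesis .
  qed
  moreover have "finite_topology V ((`) g ` T)"
    using finite_topology_image[OF top g(1)] unfolding g(2) .
  ultimately show "\<exists>T. G2_realization T V E"
    unfolding G2_realization_def by blast
next
  assume "\<exists>T. G2_realization T V E"
  then obtain T where top: "finite_topology V T" and adj: "\<forall>x\<in>V. \<forall>y\<in>V. E x y \<longleftrightarrow> G2_adj T x y"
    unfolding G2_realization_def by blast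
  obtain g :: "'a \<Rightarrow> nat" where "bij_betw g V {0..<card V}"
    using ex_bij_betw_finite_nat[OF assms] by blast
  then have g: "inj_on g V" by (rule bij_betw_imp_inj_on)
  have "graph_iso V E (g ` V) (G2_adj ((`) g ` T)) g"
    unfolding graph_iso_def using inj_on_imp_bij_betw[OF g] adj G2_adj_image[OF top g] by simp
  then show "in_G2 V E"
    unfolding in_G2_def using finite_topology_image[OF top g] by blast
qed

lemma simplicial_clique_cover_iff_simplicially_covered:
  "(\<exists>\<K>. (\<forall>K\<in>\<K>. clique V E K \<and> (\<exists>v\<in>K. simplicial V E v)) \<and>
        (\<forall>x y. E x y \<longrightarrow> (\<exists>K\<in>\<K>. x \<in> K \<and> y \<in> K)))
   \<longleftrightarrow> simplicially_covered V E"
proof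
  assume "\<exists>\<K>. (\<forall>K\<in>\<K>. clique V E K \<and> (\<exists>v\<in>K. simplicial V E v)) \<and>
        (\<forall>x y. E x y \<longrightarrow> (\<exists>K\<in>\<K>. x \<in> K \<and> y \<in> K))"
  then obtain \<K> where cliques: "\<forall>K\<in>\<K>. clique V E K \<and> (\<exists>v\<in>K. simplicial V E v)"
    and cover: "\<forall>x y. E x y \<longrightarrow> (\<exists>K\<in>\<K>. x \<in> K \<and> y \<in> K)"
    by blast
  show "simplicially_covered V E"
    unfolding simplicially_covered_def
  proof (intro allI impI)
    fix x y assume "E x y"
    then obtain K where K: "K \<in> \<K>" "x \<in> K" "y \<in> K"
      using cover by blast
    then obtain v where v: "v \<in> K" "simplicial V E v" and "clique V E K"
      using cliques by blast
    then have "K \<subseteq> closed_nbhd V E v"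
      unfolding clique_def closed_nbhd_def by auto
    then show "\<exists>v. simplicial V E v \<and> x \<in> closed_nbhd V E v \<and> y \<in> closed_nbhd V E v"
      using K v(2) by blast
  qed
next
  assume cover: "simplicially_covered V E"
  let ?\<K> = "closed_nbhd V E ` Collect (simplicial V E)"
  have "clique V E (closed_nbhd V E v) \<and> v \<in> closed_nbhd V E v" if "simplicial V E v" for v
    using that unfolding simplicial_def closed_nbhd_def by simp
  then have "\<forall>K\<in>?\<K>. clique V E K \<and> (\<exists>v\<in>K. simplicial V E v)"
    by blast
  moreover have "\<forall>x y. E x y \<longrightarrow> (\<exists>K\<in>?\<K>. x \<in> K \<and> y \<in> K)"
  proof (intro allI impI)
    fix x y assume "E x y"
    then obtain v where "simplicial V E v" "x \<in> closed_nbhd V E v" "y \<in> closed_nbhd V E v"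
      using cover unfolding simplicially_covered_def by blast
    then show "\<exists>K\<in>?\<K>. x \<in> K \<and> y \<in> K"
      by blast
  qed
  ultimately show "\<exists>\<K>. (\<forall>K\<in>\<K>. clique V E K \<and> (\<exists>v\<in>K. simplicial V E v)) \<and>
        (\<forall>x y. E x y \<longrightarrow> (\<exists>K\<in>\<K>. x \<in> K \<and> y \<in> K))"
    by (intro exI[of _ ?\<K>] conjI)
qed

theorem theorem5p1:
  fixes V :: "'a set" and E :: "'a \<Rightarrow> 'a \<Rightarrow> bool"
  assumes "simple_graph V E"
  shows "in_G2 V E \<longleftrightarrow>
    (\<exists>\<K>. (\<forall>K\<in>\<K>. clique V E K \<and> (\<exists>v\<in>K. simplicial V E v)) \<and>
         (\<forall>x y. E x y \<longrightarrow> (\<exists>K\<in>\<K>. x \<in> K \<and> y \<in> K)))"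
proof -
  have "finite V" and edges: "\<And>x y. E x y \<Longrightarrow> x \<in> V \<and> y \<in> V"
    using assms unfolding simple_graph_def by blast+
  have "in_G2 V E \<longleftrightarrow> (\<exists>T. G2_realization T V E)"
    using in_G2_iff_ex_G2_realization[OF \<open>finite V\<close>] .
  also have "\<dots> \<longleftrightarrow> simplicially_covered V E"
    using simplicially_covered_if_G2_realization[OF _ edges]
      G2_realization_alexandrov_simplicial_nbhd[OF assms] by blast
  also have "\<dots> \<longleftrightarrow> (\<exists>\<K>. (\<forall>K\<in>\<K>. clique V E K \<and> (\<exists>v\<in>K. simplicial V E v)) \<and>
         (\<forall>x y. E x y \<longrightarrow> (\<exists>K\<in>\<K>. x \<in> K \<and> y \<in> K)))"
    by (rule simplicial_clique_cover_iff_simplicially_covered[symmetric])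
  finally show ?thesis .
qed

end
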